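(* Let $R$ be a Noetherian ring, let $N\subsetneq M$ be finitely generated $R$-modules, and let $X=\{P_1,\dots,P_r\}\subseteq\operatorname{Ass}(M/N)=\{P_1,\dots,P_r,P_{r+1},\dots,P_s\}$ (the $P_i$ distinct). Then the following are equivalent: (1) the primary decompositions of $N$ in $M$ are independent over $X$; (2) for any $Q_i,Q_i'\in\Lambda_{P_i}(N\subsetneq M)$, $i=1,\dots,r$, one has $Q_1\cap\cdots\cap Q_r=Q_1'\cap\cdots\cap Q_r'$.
   Context: A submodule $Q\subseteq M$ is $P$-primary if $\operatorname{Ass}(M/Q)=\{P\}$. A primary decomposition of $N$ in $M$ means an irredundant and minimal primary decomposition $N=Q_1\cap\cdots\cap Q_s$ with $Q_i$ being $P_i$-primary, the $P_i$ distinct; $Q_i$ is then called a $P_i$-primary component of $N$ in $M$. For $P\in\operatorname{Ass}(M/N)$, $\Lambda_P(N\subsetneq M)$ is the set of all $P$-primary components of $N$ in $M$ (over all such primary decompositions). The primary decompositions of $N$ in $M$ are called independent over $X=\{P_1,\dots,P_r\}\subseteq \operatorname{Ass}(M/N)$ if for any two primary decompositions $N=Q_1\cap\cdots\cap Q_s=Q_1'\cap\cdots\cap Q_s'$ with $Q_i,Q_i'\in\Lambda_{P_i}(N\subsetneq M)$ for all $i$, one has $Q_1\cap\cdots\cap Q_r=Q_1'\cap\cdots\cap Q_r'$. *)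

theory Defs
  imports Complex_Main
begin

definition is_ideal :: "'a::comm_ring_1 set \<Rightarrow> bool" where
  "is_ideal I \<longleftrightarrow> 0 \<in> I \<and> (\<forall>a\<in>I. \<forall>b\<in>I. a + b \<in> I) \<and> (\<forall>r. \<forall>a\<in>I. r * a \<in> I)"

definition ideal_gen :: "'a::comm_ring_1 set \<Rightarrow> 'a set" where
  "ideal_gen F = \<Inter>{J. is_ideal J \<and> F \<subseteq> J}"

definition is_prime_ideal :: "'a::comm_ring_1 set \<Rightarrow> bool" where
  "is_prime_ideal P \<longleftrightarrow> is_ideal P \<and> P \<noteq> UNIV \<and> (\<forall>a b. a * b \<in> P \<longrightarrow> a \<in> P \<or> b \<in> P)"

definition noetherian_ring :: "'a::comm_ring_1 itself \<Rightarrow> bool" where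
  "noetherian_ring _ \<longleftrightarrow> (\<forall>I::'a set. is_ideal I \<longrightarrow> (\<exists>F. finite F \<and> F \<subseteq> I \<and> I = ideal_gen F))"

section \<open>Modules: submodules M of an ambient module with scalar multiplication s\<close>

definition fin_gen_mod :: "('a::comm_ring_1 \<Rightarrow> 'm::ab_group_add \<Rightarrow> 'm) \<Rightarrow> 'm set \<Rightarrow> bool" where
  "fin_gen_mod s M \<longleftrightarrow> (\<exists>F. finite F \<and> F \<subseteq> M \<and> M = Modules.module.span s F)"

text \<open>Ass(M/N) for submodules N \<subseteq> M: primes of the form (N :_R x) with x \<in> M,
  i.e. annihilators of elements x + N of M/N.\<close>
definition Ass_quot :: "('a::comm_ring_1 \<Rightarrow> 'm::ab_group_add \<Rightarrow> 'm) \<Rightarrow> 'm set \<Rightarrow> 'm set \<Rightarrow> 'a set set" where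
  "Ass_quot s M N = {P. is_prime_ideal P \<and> (\<exists>x\<in>M. P = {r. s r x \<in> N})}"

definition is_primary_sub :: "('a::comm_ring_1 \<Rightarrow> 'm::ab_group_add \<Rightarrow> 'm) \<Rightarrow> 'm set \<Rightarrow> 'a set \<Rightarrow> 'm set \<Rightarrow> bool" where
  "is_primary_sub s M P Q \<longleftrightarrow> Modules.module.subspace s Q \<and> Q \<subseteq> M \<and> Ass_quot s M Q = {P}"

text \<open>A (minimal, irredundant) primary decomposition of N in M: a family Q indexed by a
  finite set S of (hence distinct) primes, Q P being P-primary, with N the intersection,
  and no component can be omitted.\<close>
definition prim_dec :: "('a::comm_ring_1 \<Rightarrow> 'm::ab_group_add \<Rightarrow> 'm) \<Rightarrow> 'm set \<Rightarrow> 'm set \<Rightarrow> 'a set set \<Rightarrow> ('a set \<Rightarrow> 'm set) \<Rightarrow> bool" where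
  "prim_dec s M N S Q \<longleftrightarrow> finite S \<and> S \<noteq> {} \<and>
     (\<forall>P\<in>S. is_primary_sub s M P (Q P)) \<and>
     N = M \<inter> \<Inter>(Q ` S) \<and>
     (\<forall>P\<in>S. M \<inter> \<Inter>(Q ` (S - {P})) \<noteq> N)"

definition Lambda_comp :: "('a::comm_ring_1 \<Rightarrow> 'm::ab_group_add \<Rightarrow> 'm) \<Rightarrow> 'm set \<Rightarrow> 'm set \<Rightarrow> 'a set \<Rightarrow> 'm set set" where
  "Lambda_comp s M N P = {Q P | S Q. prim_dec s M N S Q \<and> P \<in> S}"

definition indep_over :: "('a::comm_ring_1 \<Rightarrow> 'm::ab_group_add \<Rightarrow> 'm) \<Rightarrow> 'm set \<Rightarrow> 'm set \<Rightarrow> 'a set set \<Rightarrow> bool" where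
  "indep_over s M N X \<longleftrightarrow> (\<forall>S Q S' Q'. prim_dec s M N S Q \<and> prim_dec s M N S' Q' \<longrightarrow>
       M \<inter> \<Inter>(Q ` X) = M \<inter> \<Inter>(Q' ` X))"

end

theory Submission
  imports Defs
begin

text \<open>Over a Noetherian ring every \<open>y \<in> M - N\<close> has a multiple \<open>z \<notin> N\<close> whose colon
  ideal \<open>(N : z)\<close> is prime (a maximal colon ideal among the multiples of \<open>y\<close>), and a prime
  ideal that is a finite intersection of ideals equals one of them. Hence the index set of every
  primary decomposition of \<open>N\<close> in \<open>M\<close> is \<open>Ass(M/N)\<close>, and choosing for each \<open>P \<in> Ass(M/N)\<close>
  any \<open>P\<close>-primary component, possibly taken from different decompositions, again gives a primary
  decomposition. Two families of components over \<open>X\<close>, completed outside \<open>X\<close> by the components of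
  one fixed decomposition, are therefore parts of two primary decompositions, which gives (1) \<open>\<Longrightarrow>\<close>
  (2); the converse holds because \<open>X \<subseteq> Ass(M/N)\<close> is covered by every decomposition.\<close>

lemma is_prime_ideal_Inter_subsetD:
  assumes "finite T" "is_prime_ideal P" "\<forall>i\<in>T. is_ideal (I i)" "\<Inter>(I ` T) \<subseteq> P"
  shows "\<exists>i\<in>T. I i \<subseteq> P"
  using assms(1,3,4)
proof (induction T rule: finite_induct)
  case empty
  then show ?case using assms(2) by (auto simp: is_prime_ideal_def)
next
  case (insert j T)
  show ?case
  proof (rule ccontr)
    assume none: "\<not> (\<exists>i\<in>insert j T. I i \<subseteq> P)"
    then obtain a where a: "a \<in> I j" "a \<notin> P" by auto
    have "\<not> \<Inter>(I ` T) \<subseteq> P" using none insert.IH insert.prems(1) by auto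
    then obtain b where b: "b \<in> \<Inter>(I ` T)" "b \<notin> P" by blast
    have "b * a \<in> I j" using a(1) insert.prems(1) by (simp add: is_ideal_def)
    moreover have "a * b \<in> I i" if "i \<in> T" for i
      using b(1) that insert.prems(1) by (simp add: is_ideal_def)
    ultimately have "a * b \<in> P" using insert.prems(2) by (auto simp: mult.commute)
    then show False using a b assms(2) by (auto simp: is_prime_ideal_def)
  qed
qed

lemma is_prime_ideal_eq_InterD:
  assumes "finite T" "is_prime_ideal P" "\<forall>i\<in>T. is_ideal (I i)" "P = \<Inter>(I ` T)"
  shows "\<exists>i\<in>T. P = I i"
  using is_prime_ideal_Inter_subsetD[OF assms(1-3)] assms(4) by blast

lemma ideal_gen_least: "is_ideal J \<Longrightarrow> F \<subseteq> J \<Longrightarrow> ideal_gen F \<subseteq> J"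
  unfolding ideal_gen_def by auto

lemma is_ideal_Union_chain:
  assumes "C \<noteq> {}" "\<forall>I\<in>C. is_ideal I" "\<forall>I\<in>C. \<forall>J\<in>C. I \<subseteq> J \<or> J \<subseteq> I"
  shows "is_ideal (\<Union>C)"
  unfolding is_ideal_def
proof (intro conjI ballI allI)
  show "0 \<in> \<Union>C" using assms(1,2) by (auto simp: is_ideal_def)
next
  fix a b assume "a \<in> \<Union>C" "b \<in> \<Union>C"
  then obtain I J where "I \<in> C" "J \<in> C" "a \<in> I" "b \<in> J" by blast
  with assms(3) obtain K where "K \<in> C" "a \<in> K" "b \<in> K" by blast
  with assms(2) show "a + b \<in> \<Union>C" by (auto simp: is_ideal_def)
next
  fix r a assume "a \<in> \<Union>C"
  then obtain I where "I \<in> C" "a \<in> I" by blast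
  with assms(2) show "r * a \<in> \<Union>C" unfolding is_ideal_def by blast
qed

lemma noetherian_ringD:
  fixes I :: "'a::comm_ring_1 set"
  assumes "noetherian_ring TYPE('a)" "is_ideal I"
  obtains F where "finite F" "F \<subseteq> I" "I = ideal_gen F"
  using mp[OF spec[OF assms(1)[unfolded noetherian_ring_def]] assms(2)] by blast

lemma noetherian_ring_maximal_ideal_exists:
  fixes A :: "'a::comm_ring_1 set set"
  assumes "noetherian_ring TYPE('a)" "A \<noteq> {}" "\<forall>I\<in>A. is_ideal I"
  shows "\<exists>I\<in>A. \<forall>J\<in>A. I \<subseteq> J \<longrightarrow> J = I"
proof (rule subset_Zorn)
  fix C assume chain: "subset.chain A C"
  show "\<exists>U\<in>A. \<forall>I\<in>C. I \<subseteq> U"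
  proof (cases "C = {}")
    case True
    then show ?thesis using assms(2) by auto
  next
    case False
    have "C \<subseteq> A" "\<forall>I\<in>C. \<forall>J\<in>C. I \<subseteq> J \<or> J \<subseteq> I"
      using chain by (auto simp: subset_chain_def)
    then have "is_ideal (\<Union>C)" using False assms(3) by (intro is_ideal_Union_chain) auto
    then obtain F where F: "finite F" "F \<subseteq> \<Union>C" "\<Union>C = ideal_gen F"
      by (rule noetherian_ringD[OF assms(1)])
    obtain B where B: "B \<in> C" "F \<subseteq> B"
      using finite_subset_Union_chain[OF F(1,2) False chain] by blast
    have "is_ideal B" using B(1) \<open>C \<subseteq> A\<close> assms(3) by blast
    then have "\<Union>C \<subseteq> B" using F(3) ideal_gen_least[OF _ B(2)] by simp
    then show ?thesis using B(1) \<open>C \<subseteq> A\<close> by blast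
  qed
qed

lemma Lambda_compE:
  assumes "C \<in> Lambda_comp s M N P"
  obtains S Q where "prim_dec s M N S Q" "P \<in> S" "C = Q P"
  using assms unfolding Lambda_comp_def by blast

lemma prim_dec_Lambda_comp:
  "prim_dec s M N S Q \<Longrightarrow> P \<in> S \<Longrightarrow> Q P \<in> Lambda_comp s M N P"
  unfolding Lambda_comp_def by blast

lemma Lambda_comp_primary:
  "C \<in> Lambda_comp s M N P \<Longrightarrow> is_primary_sub s M P C \<and> N \<subseteq> C"
  by (erule Lambda_compE) (auto simp: prim_dec_def)

context module
begin

lemma is_ideal_colon: "subspace Q \<Longrightarrow> is_ideal {t. t *s z \<in> Q}"
  unfolding is_ideal_def
  by (auto simp: subspace_0 subspace_add subspace_scale scale_left_distrib
      simp flip: scale_scale)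

lemma is_prime_ideal_colon_maximal:
  assumes N: "subspace N" and z: "z \<notin> N"
    and maximal: "\<And>a. a *s z \<notin> N \<Longrightarrow> {t. t *s (a *s z) \<in> N} \<subseteq> {t. t *s z \<in> N}"
  shows "is_prime_ideal {t. t *s z \<in> N}"
  unfolding is_prime_ideal_def
proof (intro conjI allI impI)
  show "is_ideal {t. t *s z \<in> N}" using is_ideal_colon[OF N] .
  show "{t. t *s z \<in> N} \<noteq> UNIV" using z by (metis UNIV_I mem_Collect_eq scale_one)
next
  fix a b assume "a * b \<in> {t. t *s z \<in> N}"
  then have "b \<in> {t. t *s (a *s z) \<in> N}" by (simp add: mult.commute)
  then show "a \<in> {t. t *s z \<in> N} \<or> b \<in> {t. t *s z \<in> N}" using maximal by blast
qed

lemma exists_prime_colon_multiple: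
  assumes noeth: "noetherian_ring TYPE('a)" and N: "subspace N" and y: "y \<notin> N"
  shows "\<exists>r. r *s y \<notin> N \<and> is_prime_ideal {t. t *s (r *s y) \<in> N}"
proof -
  define A where "A = (\<lambda>r. {t. t *s (r *s y) \<in> N}) ` {r. r *s y \<notin> N}"
  have "A \<noteq> {}" using y unfolding A_def by (metis empty_iff image_is_empty mem_Collect_eq scale_one)
  moreover have "\<forall>I\<in>A. is_ideal I" using is_ideal_colon[OF N] unfolding A_def by blast
  ultimately obtain I where "I \<in> A" and max: "\<forall>J\<in>A. I \<subseteq> J \<longrightarrow> J = I"
    using noetherian_ring_maximal_ideal_exists[OF noeth] by blast
  then obtain r where r: "r *s y \<notin> N" and I: "I = {t. t *s (r *s y) \<in> N}"
    unfolding A_def by blast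
  have "{t. t *s (a *s (r *s y)) \<in> N} \<subseteq> I" if "a *s (r *s y) \<notin> N" for a
  proof -
    have "{t. t *s (a *s (r *s y)) \<in> N} \<in> A"
      unfolding A_def using that by (intro image_eqI[of _ _ "a * r"]) simp_all
    moreover have "I \<subseteq> {t. t *s (a *s (r *s y)) \<in> N}"
    proof
      fix t assume "t \<in> I"
      then have "a *s (t *s (r *s y)) \<in> N"
        unfolding I mem_Collect_eq by (rule subspace_scale[OF N])
      then show "t \<in> {t. t *s (a *s (r *s y)) \<in> N}"
        by (simp only: mem_Collect_eq scale_left_commute)
    qed
    ultimately show ?thesis using max by blast
  qed
  then have "is_prime_ideal {t. t *s (r *s y) \<in> N}"
    unfolding I by (rule is_prime_ideal_colon_maximal[OF N r])
  then show ?thesis using r by blast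
qed

lemma prime_colon_Inter_primary_mem:
  assumes "finite T" "subspace M" "z \<in> M" and primary: "\<forall>P\<in>T. is_primary_sub scale M P (Q P)"
    and prime: "is_prime_ideal {t. t *s z \<in> M \<inter> \<Inter>(Q ` T)}"
  shows "{t. t *s z \<in> M \<inter> \<Inter>(Q ` T)} \<in> T"
proof -
  let ?P = "{t. t *s z \<in> M \<inter> \<Inter>(Q ` T)}"
  have "?P = (\<Inter>P\<in>T. {t. t *s z \<in> Q P})"
    using subspace_scale[OF assms(2,3)] by blast
  moreover have "\<forall>P\<in>T. is_ideal {t. t *s z \<in> Q P}"
    using primary by (simp add: is_primary_sub_def is_ideal_colon)
  ultimately have "\<exists>P\<in>T. ?P = {t. t *s z \<in> Q P}"
    by (intro is_prime_ideal_eq_InterD[OF assms(1) prime])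
  then obtain P where P: "P \<in> T" "?P = {t. t *s z \<in> Q P}" by blast
  have "?P \<in> Ass_quot scale M (Q P)"
    using prime assms(3) unfolding Ass_quot_def P(2) by blast
  moreover have "Ass_quot scale M (Q P) = {P}" using primary P(1) by (simp add: is_primary_sub_def)
  ultimately show ?thesis using P(1) by simp
qed

lemma Ass_quot_subset_primary_index:
  assumes "finite T" "subspace M" "\<forall>P\<in>T. is_primary_sub scale M P (Q P)"
    and "N = M \<inter> \<Inter>(Q ` T)"
  shows "Ass_quot scale M N \<subseteq> T"
  using prime_colon_Inter_primary_mem[OF assms(1-2) _ assms(3)] assms(4)
  by (auto simp: Ass_quot_def)

lemma subspace_primary_Inter:
  "subspace M \<Longrightarrow> \<forall>P\<in>T. is_primary_sub scale M P (Q P) \<Longrightarrow> subspace (M \<inter> \<Inter>(Q ` T))"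
  by (auto intro!: subspace_inter subspace_Inter simp: is_primary_sub_def)

lemma prim_dec_index_subset_Ass:
  assumes noeth: "noetherian_ring TYPE('a)" and M: "subspace M" and N: "subspace N"
    and dec: "prim_dec scale M N S Q" and P: "P \<in> S"
  shows "P \<in> Ass_quot scale M N"
proof -
  from dec have primary: "\<forall>P\<in>S. is_primary_sub scale M P (Q P)"
    and N_eq: "N = M \<inter> \<Inter>(Q ` S)" and irredundant: "M \<inter> \<Inter>(Q ` (S - {P})) \<noteq> N"
    using P by (auto simp: prim_dec_def)
  then obtain y where y: "y \<in> M \<inter> \<Inter>(Q ` (S - {P}))" "y \<notin> N" by blast
  obtain z r where z: "z = r *s y" "z \<notin> N" "is_prime_ideal {t. t *s z \<in> N}"
    using exists_prime_colon_multiple[OF noeth N y(2)] by blast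
  have sub: "subspace (M \<inter> \<Inter>(Q ` (S - {P})))"
    using subspace_primary_Inter[OF M] primary by blast
  have "z \<in> M \<inter> \<Inter>(Q ` (S - {P}))" unfolding z(1) by (rule subspace_scale[OF sub y(1)])
  then have "t *s z \<in> M \<inter> \<Inter>(Q ` (S - {P}))" for t by (rule subspace_scale[OF sub])
  then have colon: "{t. t *s z \<in> N} = {t. t *s z \<in> M \<inter> \<Inter>(Q ` {P})}"
    using N_eq P by auto
  have zM: "z \<in> M" using y(1) z(1) subspace_scale[OF M] by blast
  have "{t. t *s z \<in> N} \<in> {P}"
    unfolding colon using M zM primary P z(3)[unfolded colon]
    by (intro prime_colon_Inter_primary_mem) auto
  then show ?thesis using z(3) zM unfolding Ass_quot_def by blast
qed

lemma prim_dec_index_eq_Ass: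
  assumes "noetherian_ring TYPE('a)" "subspace M" "subspace N" "prim_dec scale M N S Q"
  shows "S = Ass_quot scale M N"
  using prim_dec_index_subset_Ass[OF assms] Ass_quot_subset_primary_index[of S M Q N] assms(2,4)
  by (auto simp: prim_dec_def)

lemma Inter_Lambda_comp_Ass_eq:
  assumes noeth: "noetherian_ring TYPE('a)" and M: "subspace M" and N: "subspace N"
    and "N \<subseteq> M" and comp: "\<forall>P\<in>Ass_quot scale M N. C P \<in> Lambda_comp scale M N P"
  shows "M \<inter> \<Inter>(C ` Ass_quot scale M N) = N"
proof (rule ccontr)
  assume "M \<inter> \<Inter>(C ` Ass_quot scale M N) \<noteq> N"
  moreover have "N \<subseteq> M \<inter> \<Inter>(C ` Ass_quot scale M N)"
    using comp Lambda_comp_primary \<open>N \<subseteq> M\<close> by blast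
  ultimately obtain y where y: "y \<in> M \<inter> \<Inter>(C ` Ass_quot scale M N)" "y \<notin> N" by blast
  obtain z r where z: "z = r *s y" "z \<notin> N" "is_prime_ideal {t. t *s z \<in> N}"
    using exists_prime_colon_multiple[OF noeth N y(2)] by blast
  define P0 where "P0 = {t. t *s z \<in> N}"
  have zM: "z \<in> M" using y(1) z(1) subspace_scale[OF M] by blast
  then have P0: "P0 \<in> Ass_quot scale M N" using z(3) unfolding Ass_quot_def P0_def by blast
  from comp P0 have "C P0 \<in> Lambda_comp scale M N P0" by blast
  then obtain S Q where dec: "prim_dec scale M N S Q" and "P0 \<in> S" and "C P0 = Q P0"
    by (rule Lambda_compE)
  then have primary: "\<forall>P\<in>S. is_primary_sub scale M P (Q P)" and N_eq: "N = M \<inter> \<Inter>(Q ` S)"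
    and fin: "finite (S - {P0})" by (auto simp: prim_dec_def)
  have "subspace (Q P0)" using primary \<open>P0 \<in> S\<close> by (simp add: is_primary_sub_def)
  moreover have "z \<in> Q P0"
    using y(1) P0 \<open>C P0 = Q P0\<close> subspace_scale[OF calculation] unfolding z(1) by blast
  ultimately have "t *s z \<in> Q P0" for t by (rule subspace_scale)
  \<comment> \<open>so \<open>(N : z)\<close> is already cut out by the other components, which are not \<open>P0\<close>-primary\<close>
  then have colon: "{t. t *s z \<in> M \<inter> \<Inter>(Q ` (S - {P0}))} = P0"
    unfolding P0_def N_eq by blast
  have "P0 \<in> S - {P0}"
    using prime_colon_Inter_primary_mem[OF fin M zM, of Q, unfolded colon] primary z(3)
    unfolding P0_def by blast
  then show False by blast
qed

lemma prim_dec_of_Lambda_comp: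
  assumes noeth: "noetherian_ring TYPE('a)" and M: "subspace M" and N: "subspace N"
    and dec: "prim_dec scale M N S Q" and comp: "\<forall>P\<in>S. C P \<in> Lambda_comp scale M N P"
  shows "prim_dec scale M N S C"
proof -
  have S: "S = Ass_quot scale M N" using prim_dec_index_eq_Ass[OF noeth M N dec] .
  have primary: "\<forall>P\<in>S. is_primary_sub scale M P (C P)" using comp Lambda_comp_primary by blast
  from dec have fin: "finite S" "S \<noteq> {}" and "N \<subseteq> M" by (auto simp: prim_dec_def)
  have "N = M \<inter> \<Inter>(C ` S)"
    using Inter_Lambda_comp_Ass_eq[OF noeth M N \<open>N \<subseteq> M\<close>] comp S by simp
  moreover have "M \<inter> \<Inter>(C ` (S - {P})) \<noteq> N" if "P \<in> S" for P
  proof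
    assume "M \<inter> \<Inter>(C ` (S - {P})) = N"
    then have "Ass_quot scale M N \<subseteq> S - {P}"
      using fin primary M by (intro Ass_quot_subset_primary_index) auto
    then show False using that S by blast
  qed
  ultimately show ?thesis using fin primary unfolding prim_dec_def by blast
qed

lemma prim_dec_override_on:
  assumes "noetherian_ring TYPE('a)" "subspace M" "subspace N"
    and dec: "prim_dec scale M N S Q" and "X \<subseteq> S"
    and "\<forall>P\<in>X. C P \<in> Lambda_comp scale M N P"
  shows "prim_dec scale M N S (override_on Q C X)"
proof (rule prim_dec_of_Lambda_comp[OF assms(1-3) dec])
  show "\<forall>P\<in>S. override_on Q C X P \<in> Lambda_comp scale M N P"
    using assms(6) prim_dec_Lambda_comp[OF dec] by (simp add: override_on_def)
qed

lemma indep_over_imp_Inter_Lambda_comp_eq: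
  assumes noeth: "noetherian_ring TYPE('a)" and M: "subspace M" and N: "subspace N"
    and X: "X \<subseteq> Ass_quot scale M N" and indep: "indep_over scale M N X"
    and comps: "\<forall>P\<in>X. C P \<in> Lambda_comp scale M N P \<and> C' P \<in> Lambda_comp scale M N P"
  shows "M \<inter> \<Inter>(C ` X) = M \<inter> \<Inter>(C' ` X)"
proof (cases "X = {}")
  case False
  then obtain P where "C P \<in> Lambda_comp scale M N P" using comps by blast
  then obtain S Q where dec: "prim_dec scale M N S Q" by (rule Lambda_compE)
  have "X \<subseteq> S" using prim_dec_index_eq_Ass[OF noeth M N dec] X by blast
  then have "prim_dec scale M N S (override_on Q C X)" "prim_dec scale M N S (override_on Q C' X)"
    using prim_dec_override_on[OF noeth M N dec] comps by auto
  then have "M \<inter> \<Inter>(override_on Q C X ` X) = M \<inter> \<Inter>(override_on Q C' X ` X)"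
    using indep unfolding indep_over_def by (elim allE impE) (rule conjI)
  moreover have "override_on Q D X ` X = D ` X" for D by (auto simp: override_on_def)
  ultimately show ?thesis by simp
qed simp

end

theorem lemma2p1:
  fixes s :: "'a::comm_ring_1 \<Rightarrow> 'm::ab_group_add \<Rightarrow> 'm"
    and M N :: "'m set" and X :: "'a set set"
  assumes "noetherian_ring TYPE('a)"
    and "module s"
    and "Modules.module.subspace s M" and "Modules.module.subspace s N"
    and "fin_gen_mod s M" and "fin_gen_mod s N"
    and "N \<subset> M"
    and "X \<subseteq> Ass_quot s M N"
  shows "indep_over s M N X \<longleftrightarrow>
    (\<forall>Q Q'. (\<forall>P\<in>X. Q P \<in> Lambda_comp s M N P \<and> Q' P \<in> Lambda_comp s M N P) \<longrightarrow>
       M \<inter> \<Inter>(Q ` X) = M \<inter> \<Inter>(Q' ` X))"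
proof -
  interpret module s by fact
  have X_index: "X \<subseteq> S" if "prim_dec s M N S Q" for S Q
    using prim_dec_index_eq_Ass[OF assms(1,3,4) that] assms(8) by blast
  show ?thesis
  proof (intro iffI allI impI)
    fix C C' assume "indep_over s M N X"
      and "\<forall>P\<in>X. C P \<in> Lambda_comp s M N P \<and> C' P \<in> Lambda_comp s M N P"
    then show "M \<inter> \<Inter>(C ` X) = M \<inter> \<Inter>(C' ` X)"
      by (rule indep_over_imp_Inter_Lambda_comp_eq[OF assms(1,3,4,8)])
  next
    assume comps_eq: "\<forall>C C'. (\<forall>P\<in>X. C P \<in> Lambda_comp s M N P \<and> C' P \<in> Lambda_comp s M N P)
      \<longrightarrow> M \<inter> \<Inter>(C ` X) = M \<inter> \<Inter>(C' ` X)"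
    show "indep_over s M N X"
      unfolding indep_over_def
    proof (intro allI impI, elim conjE)
      fix S Q S' Q' assume "prim_dec s M N S Q" "prim_dec s M N S' Q'"
      then have "\<forall>P\<in>X. Q P \<in> Lambda_comp s M N P \<and> Q' P \<in> Lambda_comp s M N P"
        using X_index prim_dec_Lambda_comp by blast
      then show "M \<inter> \<Inter>(Q ` X) = M \<inter> \<Inter>(Q' ` X)" using comps_eq by simp
    qed
  qed
qed

end
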